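(* Let $p\ge1$, let $\phi_1,\dots,\phi_p:\mathbb Z\to\mathbb C$, let $s\in\mathbb Z$ and $1\le m\le p$. Then the function $t\mapsto \xi^{(m)}_{t,s}$, $t\in\{s-p+1,s-p+2,\dots\}$, satisfies $$\xi^{(m)}_{t,s}=\sum_{l=1}^{p}\phi_l(t)\,\xi^{(m)}_{t-l,s}\quad\text{for all } t\ge s+1,$$ with initial values $\xi^{(m)}_{s-m+1,s}=1$ and $\xi^{(m)}_{s-i,s}=0$ for $0\le i\le p-1$, $i\ne m-1$.
   Context: Convention: $\phi_l(t)=0$ for $l>p$. For integers $t>s$ and $1\le m\le p$, $\Phi^{(m)}_{t,s}$ is the $(t-s)\times(t-s)$ lower Hessenberg matrix whose $(i,j)$ entry ($1\le i,j\le t-s$) is: $\phi_{m+i-1}(s+i)$ if $j=1$; $-1$ if $j=i+1$; $\phi_{i-j+1}(s+i)$ if $2\le j\le i$; $0$ if $j>i+1$. Define, for $t\ge s-p+1$: $\xi^{(m)}_{t,s}=\det\Phi^{(m)}_{t,s}$ if $t>s$; $\xi^{(m)}_{t,s}=1$ if $t=s-m+1$; $\xi^{(m)}_{t,s}=0$ if $s-p+1\le t\le s$ and $t\ne s-m+1$. *)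

theory Defs
  imports Main "Jordan_Normal_Form.Determinant"
begin

definition phic :: "nat \<Rightarrow> (nat \<Rightarrow> int \<Rightarrow> complex) \<Rightarrow> nat \<Rightarrow> int \<Rightarrow> complex" where
  "phic p \<phi> l t = (if 1 \<le> l \<and> l \<le> p then \<phi> l t else 0)"

text \<open>The (t-s)x(t-s) lower Hessenberg matrix Phi^(m)_{t,s}; entry (i,j) of the paper
  (1-based) is stored at position (i-1, j-1).\<close>
definition Phi_mat :: "nat \<Rightarrow> (nat \<Rightarrow> int \<Rightarrow> complex) \<Rightarrow> nat \<Rightarrow> int \<Rightarrow> int \<Rightarrow> complex mat" where
  "Phi_mat p \<phi> m t s = mat (nat (t - s)) (nat (t - s)) (\<lambda>(i0, j0).
     let i = i0 + 1; j = j0 + 1 in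
     if j = 1 then phic p \<phi> (m + i - 1) (s + int i)
     else if j = i + 1 then -1
     else if 2 \<le> j \<and> j \<le> i then phic p \<phi> (i - j + 1) (s + int i)
     else 0)"

definition xi :: "nat \<Rightarrow> (nat \<Rightarrow> int \<Rightarrow> complex) \<Rightarrow> nat \<Rightarrow> int \<Rightarrow> int \<Rightarrow> complex" where
  "xi p \<phi> m t s =
     (if t > s then det (Phi_mat p \<phi> m t s)
      else if t = s - int m + 1 then 1
      else 0)"

end

theory Submission
  imports Defs
begin

text \<open>Expanding a lower Hessenberg determinant with superdiagonal \<open>-1\<close> along its last
  column gives \<open>det H(k+1) = (\<Sum>j\<le>k. a k j * det H(j))\<close>.  For \<open>\<Phi>\<^sup>(\<^sup>m\<^sup>)\<close> with
  \<open>t = s + k + 1\<close>, the last row is \<open>\<phi>(l, t)\<close> with \<open>l = k + 1 - j\<close>, except in the first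
  column, where it is \<open>\<phi>(m + k, t)\<close>.  The terms with \<open>j \<ge> 1\<close> are the terms of the
  recurrence with \<open>t - l > s\<close>, and the first-column term is the contribution of the only
  nonzero initial value, \<open>\<xi>(s - m + 1, s) = 1\<close>, reached at \<open>l = m + k\<close>.\<close>

definition hessenberg_mat :: "nat \<Rightarrow> (nat \<Rightarrow> nat \<Rightarrow> 'a::comm_ring_1) \<Rightarrow> 'a mat" where
  "hessenberg_mat k a =
     mat k k (\<lambda>(i, j). if j \<le> i then a i j else if j = Suc i then -1 else 0)"

lemma hessenberg_mat_carrier [simp]: "hessenberg_mat k a \<in> carrier_mat k k"
  by (simp add: hessenberg_mat_def)

lemma hessenberg_mat_cong:
  assumes "\<And>i j. i < k \<Longrightarrow> a' i j = a i j"
  shows "hessenberg_mat k a' = hessenberg_mat k a"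
  by (rule eq_matI) (use assms in \<open>auto simp: hessenberg_mat_def\<close>)

lemma det_hessenberg_mat_0 [simp]: "det (hessenberg_mat 0 a) = 1"
  by (simp add: hessenberg_mat_def)

lemma det_hessenberg_mat_Suc:
  "det (hessenberg_mat (Suc k) a) = (\<Sum>j\<le>k. a k j * det (hessenberg_mat j a))"
proof (induction k arbitrary: a)
  case 0
  let ?H = "hessenberg_mat 1 a"
  have "det ?H = (\<Sum>i<1. ?H $$ (i, 0) * cofactor ?H i 0)"
    by (rule laplace_expansion_column) simp_all
  also have "\<dots> = a 0 0"
    by (simp add: cofactor_def hessenberg_mat_def mat_delete_def)
  finally show ?case by simp
next
  case (Suc k)
  let ?H = "hessenberg_mat (Suc (Suc k)) a"
  \<comment> \<open>Deleting row \<open>k\<close> moves the last row up; the cofactor sign \<open>-1\<close> cancels the entry \<open>-1\<close>.\<close>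
  define a' where "a' = (\<lambda>i j. if i = k then a (Suc k) j else a i j)"
  have last_row_moved: "a' k j = a (Suc k) j" for j
    by (simp add: a'_def)
  have minor_diag: "mat_delete ?H (Suc k) (Suc k) = hessenberg_mat (Suc k) a"
    by (rule eq_matI) (auto simp: hessenberg_mat_def mat_delete_def)
  have minor_super: "mat_delete ?H k (Suc k) = hessenberg_mat (Suc k) a'"
    by (rule eq_matI) (auto simp: hessenberg_mat_def mat_delete_def a'_def)
  have lower_minors: "hessenberg_mat j a' = hessenberg_mat j a" if "j \<le> k" for j
    by (rule hessenberg_mat_cong) (use that in \<open>auto simp: a'_def\<close>)
  have "det ?H = (\<Sum>i<Suc (Suc k). ?H $$ (i, Suc k) * cofactor ?H i (Suc k))"
    by (rule laplace_expansion_column) simp_all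
  also have "\<dots> = (\<Sum>i<k. ?H $$ (i, Suc k) * cofactor ?H i (Suc k))
      + ?H $$ (k, Suc k) * cofactor ?H k (Suc k)
      + ?H $$ (Suc k, Suc k) * cofactor ?H (Suc k) (Suc k)"
    by simp
  also have "(\<Sum>i<k. ?H $$ (i, Suc k) * cofactor ?H i (Suc k)) = 0"
    by (rule sum.neutral) (auto simp: hessenberg_mat_def)
  also have "?H $$ (k, Suc k) * cofactor ?H k (Suc k) = det (hessenberg_mat (Suc k) a')"
    unfolding cofactor_def minor_super by (simp add: hessenberg_mat_def)
  also have "\<dots> = (\<Sum>j\<le>k. a (Suc k) j * det (hessenberg_mat j a))"
    unfolding Suc.IH by (rule sum.cong) (simp_all add: last_row_moved lower_minors)
  also have "?H $$ (Suc k, Suc k) * cofactor ?H (Suc k) (Suc k)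
      = a (Suc k) (Suc k) * det (hessenberg_mat (Suc k) a)"
    unfolding cofactor_def minor_diag by (simp add: hessenberg_mat_def)
  finally show ?case by simp
qed

definition Phi_entry :: "nat \<Rightarrow> (nat \<Rightarrow> int \<Rightarrow> complex) \<Rightarrow> nat \<Rightarrow> int \<Rightarrow> nat \<Rightarrow> nat \<Rightarrow> complex" where
  "Phi_entry p \<phi> m s i j =
     (if j = 0 then phic p \<phi> (m + i) (s + int i + 1) else phic p \<phi> (i - j + 1) (s + int i + 1))"

lemma Phi_mat_eq_hessenberg_mat:
  "Phi_mat p \<phi> m (s + int n) s = hessenberg_mat n (Phi_entry p \<phi> m s)"
  by (rule eq_matI) (auto simp: Phi_mat_def hessenberg_mat_def Phi_entry_def Let_def add_ac)

lemma xi_eq_det_hessenberg_mat: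
  "1 \<le> n \<Longrightarrow> xi p \<phi> m (s + int n) s = det (hessenberg_mat n (Phi_entry p \<phi> m s))"
  by (simp add: xi_def flip: Phi_mat_eq_hessenberg_mat)

lemma xi_le: "t \<le> s \<Longrightarrow> xi p \<phi> m t s = (if t = s - int m + 1 then 1 else 0)"
  by (simp add: xi_def)

lemma xi_Suc_expansion:
  assumes t: "t = s + int (Suc k)"
  shows "xi p \<phi> m t s
    = phic p \<phi> (m + k) t + (\<Sum>l = 1..k. phic p \<phi> l t * xi p \<phi> m (t - int l) s)"
proof -
  let ?a = "Phi_entry p \<phi> m s"
  have last_row: "?a k j = phic p \<phi> (k + 1 - j) t" if "j \<in> {1..k}" for j
    using that by (simp add: Phi_entry_def t Suc_diff_le add_ac)
  have "xi p \<phi> m t s = (\<Sum>j\<le>k. ?a k j * det (hessenberg_mat j ?a))"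
    using xi_eq_det_hessenberg_mat[of "Suc k"] by (simp add: t det_hessenberg_mat_Suc)
  also have "\<dots> = ?a k 0 + (\<Sum>j = 1..k. ?a k j * det (hessenberg_mat j ?a))"
    by (simp add: atMost_atLeast0 sum.atLeast_Suc_atMost)
  also have "?a k 0 = phic p \<phi> (m + k) t"
    by (simp add: Phi_entry_def t add_ac)
  also have "(\<Sum>j = 1..k. ?a k j * det (hessenberg_mat j ?a))
      = (\<Sum>j = 1..k. phic p \<phi> (k + 1 - j) t * xi p \<phi> m (s + int j) s)"
    by (rule sum.cong) (simp_all add: last_row xi_eq_det_hessenberg_mat)
  also have "\<dots> = (\<Sum>l = 1..k. phic p \<phi> l t * xi p \<phi> m (t - int l) s)"
    by (rule sum.reindex_bij_witness[where i = "\<lambda>l. k + 1 - l" and j = "\<lambda>j. k + 1 - j"])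
       (auto simp: t)
  finally show ?thesis .
qed

lemma xi_recurrence:
  assumes "1 \<le> m" and "m \<le> p" and "s < t"
  shows "xi p \<phi> m t s = (\<Sum>l = 1..p. phic p \<phi> l t * xi p \<phi> m (t - int l) s)"
proof -
  define f where "f l = phic p \<phi> l t * xi p \<phi> m (t - int l) s" for l
  obtain k where t: "t = s + int (Suc k)"
    using \<open>s < t\<close> by (intro that[of "nat (t - s - 1)"]) simp
  have initial_terms: "sum f {Suc k..p + Suc k} = phic p \<phi> (m + k) t"
  proof -
    have "sum f {Suc k..p + Suc k}
        = (\<Sum>l\<in>{Suc k..p + Suc k}. if l = m + k then phic p \<phi> l t else 0)"
      by (rule sum.cong) (auto simp: f_def t xi_le)
    then show ?thesis
      using assms by (simp add: sum.delta)
  qed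
  have "xi p \<phi> m t s = sum f {Suc k..p + Suc k} + sum f {1..k}"
    unfolding initial_terms xi_Suc_expansion[OF t] f_def by simp
  also have "\<dots> = sum f {1..p + Suc k}"
  proof -
    have "{1..p + Suc k} = {1..k} \<union> {Suc k..p + Suc k}"
      by auto
    then show ?thesis
      by (simp add: sum.union_disjoint add.commute)
  qed
  also have "\<dots> = sum f {1..p}"
    by (rule sum.mono_neutral_right) (auto simp: f_def phic_def)
  finally show ?thesis
    by (simp add: f_def)
qed

theorem proposition1:
  fixes p m :: nat and \<phi> :: "nat \<Rightarrow> int \<Rightarrow> complex" and s :: int
  assumes "1 \<le> p" and "1 \<le> m" and "m \<le> p"
  shows "(\<forall>t. t \<ge> s + 1 \<longrightarrow>
            xi p \<phi> m t s = (\<Sum>l = 1..p. phic p \<phi> l t * xi p \<phi> m (t - int l) s))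
       \<and> xi p \<phi> m (s - int m + 1) s = 1
       \<and> (\<forall>i::nat. i \<le> p - 1 \<and> i \<noteq> m - 1 \<longrightarrow> xi p \<phi> m (s - int i) s = 0)"
proof (intro conjI allI impI)
  show "xi p \<phi> m t s = (\<Sum>l = 1..p. phic p \<phi> l t * xi p \<phi> m (t - int l) s)"
    if "s + 1 \<le> t" for t
    using xi_recurrence[OF assms(2,3)] that by simp
  show "xi p \<phi> m (s - int m + 1) s = 1"
    using assms by (simp add: xi_le)
  show "xi p \<phi> m (s - int i) s = 0" if "i \<le> p - 1 \<and> i \<noteq> m - 1" for i
  proof -
    have "s - int i \<noteq> s - int m + 1"
      using that assms by linarith
    then show ?thesis
      by (simp add: xi_le)
  qed
qed

end
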